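(* Let $T=(L,R,\tau,\sigma)$ be a rewrite rule and $m:L\to G$ a matching with respect to $T$. Let $(\mathcal{H},\tau_1,\delta)$ be a pushout of $\tau$ and $|m|$ in the category of sets ($\tau_1:|G|\to\mathcal{H}$, $\delta:|R|\to\mathcal{H}$, $\delta\circ\tau=\tau_1\circ|m|$), let $\Gamma=|G|-|m(L)|$, $\Sigma=\mathrm{dom}(\sigma)$, $\Delta=|R|-\Sigma$, and let $\sigma_1:\mathcal{H}\rightharpoonup|G|$ be the unique partial function with domain $\delta(\Sigma)$ such that $|m|\circ\sigma=\sigma_1\circ\delta$ on $\Sigma$. Let $H$ be the graph with set of nodes $\mathcal{H}$ determined by requiring that $\tau_1$ is strictly graphic on $\Gamma$, that $\delta$ is strictly graphic on $\Delta$, and that each node $n_1\in\delta(\Sigma)$ is a $\tau_1$-clone of $\sigma_1(n_1)$. Then $\delta$ underlies a graph morphism $d:R\to H$, and $(H,\tau_1,d,\sigma_1)$ is a cloning pushout of $T$ and $m$, i.e. an initial object of the category of cloning cones over $T$ and $m$.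
   Context: A signature $\Omega$ assigns an arity to each symbol; for a function $f$, $f^*$ acts letterwise on strings. A termgraph (graph) $G$ has node set $|G|$, a subset of labeled nodes, a labeling $\mathcal{L}_G$ of labeled nodes by symbols of $\Omega$ and a successor function $\mathcal{S}_G$ giving each labeled node a string of nodes of length the arity of its label. A graph morphism $g:G\to H$ is a function $|G|\to|H|$ sending labeled nodes to labeled nodes with $\mathcal{L}_H(g(n))=\mathcal{L}_G(n)$ and $\mathcal{S}_H(g(n))=g^*(\mathcal{S}_G(n))$ for each labeled $n$; $|g|$ is its underlying function. A function $\gamma:|G|\to|H|$ is graphic at a node $n$ if $n$ is unlabeled or both $n,\gamma(n)$ are labeled with $\mathcal{L}_H(\gamma(n))=\mathcal{L}_G(n)$, $\mathcal{S}_H(\gamma(n))=\gamma^*(\mathcal{S}_G(n))$; strictly graphic at $n$ if both $n,\gamma(n)$ are unlabeled or both are labeled with these equalities; (strictly) graphic on a set if so at each node of it. For $\tau:|G|\to|H|$, a node $p\in|H|$ is a $\tau$-clone of $q\in|G|$ if $p$ is labeled iff $q$ is, and then $\mathcal{L}_H(p)=\mathcal{L}_G(q)$ and $\mathcal{S}_H(p)=\tau^*(\mathcal{S}_G(q))$. A rewrite rule is $(L,R,\tau,\sigma)$ with $L,R$ graphs, $\tau:|L|\to|R|$ a function, $\sigma:|R|\rightharpoonup|L|$ a partial function such that each $n\in\mathrm{dom}(\sigma)$ is unlabeled or a $\tau$-clone of $\sigma(n)$. A morphism of rewrite rules $(L,R,\tau,\sigma)\to(L_1,R_1,\tau_1,\sigma_1)$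 is a pair of graph morphisms $m:L\to L_1$, $d:R\to R_1$ with $|d|\circ\tau=\tau_1\circ|m|$, $d(\mathrm{dom}(\sigma))\subseteq\mathrm{dom}(\sigma_1)$ and $|m|\circ\sigma=\sigma_1\circ|d|$ on $\mathrm{dom}(\sigma)$. A matching with respect to $T=(L,R,\tau,\sigma)$ is a graph morphism $m:L\to G$ such that whenever $m(p)=m(p')$ for distinct $p,p'\in|L|$, then $\tau(p),\tau(p')\in\mathrm{dom}(\sigma)$ and $\sigma(\tau(p))=\sigma(\tau(p'))$. A cloning cone over $T$ and $m:L\to G$ is a tuple $(H,\tau_1,d,\sigma_1)$ with $H$ a graph, $\tau_1:|G|\to|H|$ a function, $d:R\to H$ a graph morphism, $\sigma_1:|H|\rightharpoonup|G|$ a partial function, such that $(G,H,\tau_1,\sigma_1)$ is a rewrite rule, $(m,d)$ is a morphism of rewrite rules from $T$ to $(G,H,\tau_1,\sigma_1)$, $\tau_1$ is graphic on $|G|-|m(L)|$, and every $n_1\in\mathrm{dom}(\sigma_1)$ is a $\tau_1$-clone of $\sigma_1(n_1)$. A morphism of cloning cones $(H,\tau_1,d,\sigma_1)\to(H',\tau_1',d',\sigma_1')$ is a graph morphism $h:H\to H'$ with $|h|\circ\tau_1=\tau_1'$, $h\circ d=d'$, $h(\mathrm{dom}(\sigma_1))\subseteq\mathrm{dom}(\sigma_1')$ and $\sigma_1'\circ|h|=\sigma_1$ on $\mathrm{dom}(\sigma_1)$; this defines the category of cloning cones over $T$ and $m$. *)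

theory Defs
  imports Main
begin

text \<open>Values of lab/succ outside labeled nodes are irrelevant.\<close>

record ('n, 'f) tgraph =
  nodes :: "'n set"
  lab   :: "'n \<Rightarrow> 'f option"
  succ  :: "'n \<Rightarrow> 'n list"

definition labeled :: "('n, 'f) tgraph \<Rightarrow> 'n \<Rightarrow> bool" where
  "labeled G n \<longleftrightarrow> lab G n \<noteq> None"

definition wf_graph :: "('f \<Rightarrow> nat) \<Rightarrow> ('n, 'f) tgraph \<Rightarrow> bool" where
  "wf_graph ar G \<longleftrightarrow>
     (\<forall>n. labeled G n \<longrightarrow> n \<in> nodes G \<and>
        length (succ G n) = ar (the (lab G n)) \<and> set (succ G n) \<subseteq> nodes G)"

definition graph_hom :: "('a, 'f) tgraph \<Rightarrow> ('b, 'f) tgraph \<Rightarrow> ('a \<Rightarrow> 'b) \<Rightarrow> bool" where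
  "graph_hom G H g \<longleftrightarrow> g ` nodes G \<subseteq> nodes H \<and>
     (\<forall>n\<in>nodes G. labeled G n \<longrightarrow>
        lab H (g n) = lab G n \<and> succ H (g n) = map g (succ G n))"

definition graphic_at :: "('a, 'f) tgraph \<Rightarrow> ('b, 'f) tgraph \<Rightarrow> ('a \<Rightarrow> 'b) \<Rightarrow> 'a \<Rightarrow> bool" where
  "graphic_at G H \<gamma> n \<longleftrightarrow> \<not> labeled G n \<or>
     (labeled H (\<gamma> n) \<and> lab H (\<gamma> n) = lab G n \<and> succ H (\<gamma> n) = map \<gamma> (succ G n))"

definition strictly_graphic_at :: "('a, 'f) tgraph \<Rightarrow> ('b, 'f) tgraph \<Rightarrow> ('a \<Rightarrow> 'b) \<Rightarrow> 'a \<Rightarrow> bool" where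
  "strictly_graphic_at G H \<gamma> n \<longleftrightarrow> (\<not> labeled G n \<and> \<not> labeled H (\<gamma> n)) \<or>
     (labeled G n \<and> labeled H (\<gamma> n) \<and> lab H (\<gamma> n) = lab G n \<and> succ H (\<gamma> n) = map \<gamma> (succ G n))"

definition is_clone :: "('a, 'f) tgraph \<Rightarrow> ('b, 'f) tgraph \<Rightarrow> ('a \<Rightarrow> 'b) \<Rightarrow> 'b \<Rightarrow> 'a \<Rightarrow> bool" where
  "is_clone G H \<tau> p q \<longleftrightarrow> (labeled H p \<longleftrightarrow> labeled G q) \<and>
     (labeled G q \<longrightarrow> lab H p = lab G q \<and> succ H p = map \<tau> (succ G q))"

definition rewrite_rule :: "('f \<Rightarrow> nat) \<Rightarrow> ('a, 'f) tgraph \<Rightarrow> ('b, 'f) tgraph \<Rightarrow>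
    ('a \<Rightarrow> 'b) \<Rightarrow> ('b \<Rightarrow> 'a option) \<Rightarrow> bool" where
  "rewrite_rule ar L R \<tau> \<sigma> \<longleftrightarrow> wf_graph ar L \<and> wf_graph ar R \<and>
     \<tau> ` nodes L \<subseteq> nodes R \<and> dom \<sigma> \<subseteq> nodes R \<and> ran \<sigma> \<subseteq> nodes L \<and>
     (\<forall>n\<in>dom \<sigma>. \<not> labeled R n \<or> is_clone L R \<tau> n (the (\<sigma> n)))"

definition rule_morphism :: "('a, 'f) tgraph \<Rightarrow> ('b, 'f) tgraph \<Rightarrow> ('a \<Rightarrow> 'b) \<Rightarrow> ('b \<Rightarrow> 'a option) \<Rightarrow>
    ('c, 'f) tgraph \<Rightarrow> ('d, 'f) tgraph \<Rightarrow> ('c \<Rightarrow> 'd) \<Rightarrow> ('d \<Rightarrow> 'c option) \<Rightarrow>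
    ('a \<Rightarrow> 'c) \<Rightarrow> ('b \<Rightarrow> 'd) \<Rightarrow> bool" where
  "rule_morphism L R \<tau> \<sigma> L1 R1 \<tau>1 \<sigma>1 m d \<longleftrightarrow> graph_hom L L1 m \<and> graph_hom R R1 d \<and>
     (\<forall>x\<in>nodes L. d (\<tau> x) = \<tau>1 (m x)) \<and> d ` dom \<sigma> \<subseteq> dom \<sigma>1 \<and>
     (\<forall>n\<in>dom \<sigma>. \<sigma>1 (d n) = Some (m (the (\<sigma> n))))"

definition matching :: "('a, 'f) tgraph \<Rightarrow> ('b, 'f) tgraph \<Rightarrow> ('a \<Rightarrow> 'b) \<Rightarrow> ('b \<Rightarrow> 'a option) \<Rightarrow>
    ('g, 'f) tgraph \<Rightarrow> ('a \<Rightarrow> 'g) \<Rightarrow> bool" where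
  "matching L R \<tau> \<sigma> G m \<longleftrightarrow> graph_hom L G m \<and>
     (\<forall>p\<in>nodes L. \<forall>p'\<in>nodes L. p \<noteq> p' \<and> m p = m p' \<longrightarrow>
        \<tau> p \<in> dom \<sigma> \<and> \<tau> p' \<in> dom \<sigma> \<and> \<sigma> (\<tau> p) = \<sigma> (\<tau> p'))"

definition cloning_cone :: "('f \<Rightarrow> nat) \<Rightarrow> ('a, 'f) tgraph \<Rightarrow> ('b, 'f) tgraph \<Rightarrow> ('a \<Rightarrow> 'b) \<Rightarrow>
    ('b \<Rightarrow> 'a option) \<Rightarrow> ('g, 'f) tgraph \<Rightarrow> ('a \<Rightarrow> 'g) \<Rightarrow>
    ('h, 'f) tgraph \<Rightarrow> ('g \<Rightarrow> 'h) \<Rightarrow> ('b \<Rightarrow> 'h) \<Rightarrow> ('h \<Rightarrow> 'g option) \<Rightarrow> bool" where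
  "cloning_cone ar L R \<tau> \<sigma> G m H \<tau>1 d \<sigma>1 \<longleftrightarrow>
     rewrite_rule ar G H \<tau>1 \<sigma>1 \<and> rule_morphism L R \<tau> \<sigma> G H \<tau>1 \<sigma>1 m d \<and>
     (\<forall>n\<in>nodes G - m ` nodes L. graphic_at G H \<tau>1 n) \<and>
     (\<forall>n1\<in>dom \<sigma>1. is_clone G H \<tau>1 n1 (the (\<sigma>1 n1)))"

definition cone_morphism :: "('a, 'f) tgraph \<Rightarrow> ('b, 'f) tgraph \<Rightarrow> ('g, 'f) tgraph \<Rightarrow>
    ('h, 'f) tgraph \<Rightarrow> ('g \<Rightarrow> 'h) \<Rightarrow> ('b \<Rightarrow> 'h) \<Rightarrow> ('h \<Rightarrow> 'g option) \<Rightarrow>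
    ('k, 'f) tgraph \<Rightarrow> ('g \<Rightarrow> 'k) \<Rightarrow> ('b \<Rightarrow> 'k) \<Rightarrow> ('k \<Rightarrow> 'g option) \<Rightarrow> ('h \<Rightarrow> 'k) \<Rightarrow> bool" where
  "cone_morphism L R G H \<tau>1 d \<sigma>1 H' \<tau>1' d' \<sigma>1' h \<longleftrightarrow> graph_hom H H' h \<and>
     (\<forall>x\<in>nodes G. h (\<tau>1 x) = \<tau>1' x) \<and> (\<forall>x\<in>nodes R. h (d x) = d' x) \<and>
     h ` dom \<sigma>1 \<subseteq> dom \<sigma>1' \<and> (\<forall>n\<in>dom \<sigma>1. \<sigma>1' (h n) = \<sigma>1 n)"

text \<open>Initial object of the category of cloning cones over T and m, where the
  competing cones range over graphs with nodes of type 'k (a free type variable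
  in the theorem, hence arbitrary).  Morphisms are identified when they agree on
  the nodes of H.\<close>
definition cloning_pushout :: "'k itself \<Rightarrow> ('f \<Rightarrow> nat) \<Rightarrow> ('a, 'f) tgraph \<Rightarrow> ('b, 'f) tgraph \<Rightarrow>
    ('a \<Rightarrow> 'b) \<Rightarrow> ('b \<Rightarrow> 'a option) \<Rightarrow> ('g, 'f) tgraph \<Rightarrow> ('a \<Rightarrow> 'g) \<Rightarrow>
    ('h, 'f) tgraph \<Rightarrow> ('g \<Rightarrow> 'h) \<Rightarrow> ('b \<Rightarrow> 'h) \<Rightarrow> ('h \<Rightarrow> 'g option) \<Rightarrow> bool" where
  "cloning_pushout (_ :: 'k itself) ar L R \<tau> \<sigma> G m H \<tau>1 d \<sigma>1 \<longleftrightarrow>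
     cloning_cone ar L R \<tau> \<sigma> G m H \<tau>1 d \<sigma>1 \<and>
     (\<forall>(H' :: ('k, 'f) tgraph) \<tau>1' d' \<sigma>1'. cloning_cone ar L R \<tau> \<sigma> G m H' \<tau>1' d' \<sigma>1' \<longrightarrow>
        (\<exists>h. cone_morphism L R G H \<tau>1 d \<sigma>1 H' \<tau>1' d' \<sigma>1' h \<and>
           (\<forall>h'. cone_morphism L R G H \<tau>1 d \<sigma>1 H' \<tau>1' d' \<sigma>1' h' \<longrightarrow>
                 (\<forall>y\<in>nodes H. h' y = h y))))"

text \<open>The universal property is tested against all sets of type 'x;
  the theorem instantiates 'x with ('c + 'b) set, which contains (an isomorphic
  copy of) the canonical pushout, so this is equivalent to the full universal
  property in Set.\<close>
definition set_pushout :: "'x itself \<Rightarrow> 'a set \<Rightarrow> 'b set \<Rightarrow> 'c set \<Rightarrow> ('a \<Rightarrow> 'b) \<Rightarrow> ('a \<Rightarrow> 'c) \<Rightarrow>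
    'h set \<Rightarrow> ('c \<Rightarrow> 'h) \<Rightarrow> ('b \<Rightarrow> 'h) \<Rightarrow> bool" where
  "set_pushout (_ :: 'x itself) A B C t f Hs t1 dl \<longleftrightarrow>
     t ` A \<subseteq> B \<and> f ` A \<subseteq> C \<and> t1 ` C \<subseteq> Hs \<and> dl ` B \<subseteq> Hs \<and>
     (\<forall>x\<in>A. dl (t x) = t1 (f x)) \<and>
     (\<forall>(X :: 'x set) u v. u ` C \<subseteq> X \<longrightarrow> v ` B \<subseteq> X \<longrightarrow> (\<forall>x\<in>A. v (t x) = u (f x)) \<longrightarrow>
        (\<exists>h. h ` Hs \<subseteq> X \<and> (\<forall>x\<in>C. h (t1 x) = u x) \<and> (\<forall>x\<in>B. h (dl x) = v x) \<and>
           (\<forall>h'. h' ` Hs \<subseteq> X \<and> (\<forall>x\<in>C. h' (t1 x) = u x) \<and> (\<forall>x\<in>B. h' (dl x) = v x) \<longrightarrow>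
                 (\<forall>y\<in>Hs. h' y = h y))))"

end

theory Submission
  imports Defs
begin

text \<open>The pushout of sets is jointly surjective, so every node of H is the image of a node of
  \<Gamma>, of \<Sigma> or of \<Delta>; on each of these three kinds of nodes the conditions defining H force
  label and successors, and the cone conditions force the same data in any other cloning cone.
  Hence the mediating map of the underlying set pushout is automatically a morphism of graphs
  and of cloning cones, and it is unique because it is unique already on sets.\<close>

lemma set_pushout_jointly_surjective:
  assumes "set_pushout TYPE('x set) A B C t f Hs t1 dl"
  shows "Hs \<subseteq> t1 ` C \<union> dl ` B"
proof
  fix y assume y: "y \<in> Hs"
  from assms[unfolded set_pushout_def] obtain h0 :: "_ \<Rightarrow> 'x set" where
    h0: "\<forall>x\<in>C. h0 (t1 x) = {}" "\<forall>x\<in>B. h0 (dl x) = {}"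
    "\<forall>h'. h' ` Hs \<subseteq> UNIV \<and> (\<forall>x\<in>C. h' (t1 x) = {}) \<and> (\<forall>x\<in>B. h' (dl x) = {}) \<longrightarrow>
       (\<forall>y\<in>Hs. h' y = h0 y)"
    by (elim conjE allE[where x=UNIV] allE[where x="\<lambda>_. {}"] impE) auto
  show "y \<in> t1 ` C \<union> dl ` B"
  proof (rule ccontr)
    assume y_outside: "y \<notin> t1 ` C \<union> dl ` B"
    define h2 where "h2 = (\<lambda>z. if z \<in> t1 ` C \<union> dl ` B then h0 z else - h0 z)"
    have "\<forall>x\<in>C. h2 (t1 x) = {}" "\<forall>x\<in>B. h2 (dl x) = {}" using h0 by (auto simp: h2_def)
    with h0(3) y have "h2 y = h0 y" by blast
    with y_outside show False by (auto simp: h2_def)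
  qed
qed

lemma rtrancl_symmetric_closure_invariant:
  assumes "(z, z') \<in> (r \<union> r\<inverse>)\<^sup>*" and "\<forall>(a, b)\<in>r. g a = g b"
  shows "g z = g z'"
  using assms(1) by induction (use assms(2) in auto)

text \<open>The universal property of set_pushout is only available for targets of type
  ('c + 'b) set; testing it against the quotient of C + B by the equivalence generated by
  f a \<sim> t a shows that the pushout identifies nothing more.\<close>

lemma set_pushout_kernel:
  fixes t :: "'a \<Rightarrow> 'b" and f :: "'a \<Rightarrow> 'c"
  assumes po: "set_pushout TYPE(('c + 'b) set) A B C t f Hs t1 dl"
    and z: "z \<in> Inl ` C \<union> Inr ` B" and z': "z' \<in> Inl ` C \<union> Inr ` B"
    and eq: "case_sum t1 dl z = case_sum t1 dl z'"
  shows "(z, z') \<in> ({(Inr (t a), Inl (f a)) | a. a \<in> A} \<union> {(Inr (t a), Inl (f a)) | a. a \<in> A}\<inverse>)\<^sup>*"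
proof -
  define r0 where "r0 = {(Inr (t a) :: 'c + 'b, Inl (f a) :: 'c + 'b) | a. a \<in> A}"
  define r where "r = (r0 \<union> r0\<inverse>)\<^sup>*"
  have "sym r" unfolding r_def by (intro sym_rtrancl) (auto simp: sym_def)
  moreover have "trans r" unfolding r_def by (rule trans_rtrancl)
  ultimately have same_class: "r `` {x} = r `` {y}" if "(x, y) \<in> r" for x y
    using that unfolding sym_def trans_def by blast
  define u where "u = (\<lambda>x. r `` {Inl x})"
  define v where "v = (\<lambda>x. r `` {Inr x})"
  have "\<forall>x\<in>A. v (t x) = u (f x)"
  proof
    fix x assume "x \<in> A"
    then have "(Inr (t x), Inl (f x)) \<in> r" unfolding r_def r0_def by blast
    then show "v (t x) = u (f x)" unfolding u_def v_def by (rule same_class)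
  qed
  with po[unfolded set_pushout_def] obtain h0 where
    h0: "\<forall>x\<in>C. h0 (t1 x) = u x" "\<forall>x\<in>B. h0 (dl x) = v x"
    by (elim conjE allE[where x=UNIV] allE[where x=u] allE[where x=v] impE) auto
  have "h0 (case_sum t1 dl z) = r `` {z}" "h0 (case_sum t1 dl z') = r `` {z'}"
    using z z' h0 by (auto simp: u_def v_def)
  with eq have "r `` {z} = r `` {z'}" by simp
  moreover have "z' \<in> r `` {z'}" by (simp add: r_def)
  ultimately have "(z, z') \<in> r" by (metis Image_singleton_iff)
  then show ?thesis by (simp add: r_def r0_def)
qed

lemma set_pushout_factor:
  fixes t :: "'a \<Rightarrow> 'b" and f :: "'a \<Rightarrow> 'c" and u :: "'c \<Rightarrow> 'k"
  assumes po: "set_pushout TYPE(('c + 'b) set) A B C t f Hs t1 dl"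
    and compat: "\<forall>x\<in>A. v (t x) = u (f x)"
  obtains h where "\<forall>x\<in>C. h (t1 x) = u x" and "\<forall>x\<in>B. h (dl x) = v x"
proof -
  define S where "S = Inl ` C \<union> Inr ` B"
  define g where "g = case_sum u v"
  define h where "h = (\<lambda>y. g (SOME z. z \<in> S \<and> case_sum t1 dl z = y))"
  have g_invariant: "\<forall>(a, b)\<in>{(Inr (t a), Inl (f a)) | a. a \<in> A}. g a = g b"
    using compat by (auto simp: g_def)
  have h_factors: "h (case_sum t1 dl z) = g z" if "z \<in> S" for z
  proof -
    let ?z' = "SOME z'. z' \<in> S \<and> case_sum t1 dl z' = case_sum t1 dl z"
    have "?z' \<in> S \<and> case_sum t1 dl ?z' = case_sum t1 dl z"
      by (rule someI[where x=z]) (use that in auto)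
    then have "g ?z' = g z"
      using set_pushout_kernel[OF po _ that[unfolded S_def]]
        rtrancl_symmetric_closure_invariant[OF _ g_invariant]
      unfolding S_def by blast
    then show ?thesis by (simp add: h_def)
  qed
  show thesis
  proof
    show "\<forall>x\<in>C. h (t1 x) = u x" using h_factors[of "Inl _"] by (simp add: S_def g_def)
    show "\<forall>x\<in>B. h (dl x) = v x" using h_factors[of "Inr _"] by (simp add: S_def g_def)
  qed
qed

lemma wf_graph_succ_subset:
  "wf_graph ar X \<Longrightarrow> labeled X n \<Longrightarrow> set (succ X n) \<subseteq> nodes X"
  by (simp add: wf_graph_def)

locale cloning_construction =
  fixes ar :: "'f \<Rightarrow> nat"
    and L :: "('l, 'f) tgraph" and R :: "('r, 'f) tgraph" and G :: "('g, 'f) tgraph"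
    and \<tau> :: "'l \<Rightarrow> 'r" and \<sigma> :: "'r \<Rightarrow> 'l option" and m :: "'l \<Rightarrow> 'g"
    and Hs :: "'h set" and \<tau>1 :: "'g \<Rightarrow> 'h" and \<delta> :: "'r \<Rightarrow> 'h"
    and \<sigma>1 :: "'h \<Rightarrow> 'g option" and H :: "('h, 'f) tgraph"
  assumes rule: "rewrite_rule ar L R \<tau> \<sigma>"
    and wfG: "wf_graph ar G"
    and match: "matching L R \<tau> \<sigma> G m"
    and po: "set_pushout TYPE(('g + 'r) set) (nodes L) (nodes R) (nodes G) \<tau> m Hs \<tau>1 \<delta>"
    and sigma1_dom: "dom \<sigma>1 = \<delta> ` dom \<sigma>"
    and sigma1_eq: "\<forall>n\<in>dom \<sigma>. \<sigma>1 (\<delta> n) = Some (m (the (\<sigma> n)))"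
    and wfH: "wf_graph ar H"
    and H_nodes: "nodes H = Hs"
    and H_Gamma: "\<forall>n\<in>nodes G - m ` nodes L. strictly_graphic_at G H \<tau>1 n"
    and H_Delta: "\<forall>n\<in>nodes R - dom \<sigma>. strictly_graphic_at R H \<delta> n"
    and H_Sigma: "\<forall>n1\<in>\<delta> ` dom \<sigma>. is_clone G H \<tau>1 n1 (the (\<sigma>1 n1))"
begin

lemma wfL: "wf_graph ar L" and wfR: "wf_graph ar R" and tau_nodes: "\<tau> ` nodes L \<subseteq> nodes R"
  and dom_sigma_nodes: "dom \<sigma> \<subseteq> nodes R"
  and clone_R: "\<And>n. n \<in> dom \<sigma> \<Longrightarrow> labeled R n \<Longrightarrow> is_clone L R \<tau> n (the (\<sigma> n))"
  using rule by (simp_all add: rewrite_rule_def)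

lemma sigma_nodes: "n \<in> dom \<sigma> \<Longrightarrow> the (\<sigma> n) \<in> nodes L"
  using rule by (auto simp: rewrite_rule_def ran_def dom_def)

lemma m_graph_hom: "graph_hom L G m"
  using match by (simp add: matching_def)

lemma tau1_nodes: "\<tau>1 ` nodes G \<subseteq> nodes H" and delta_nodes: "\<delta> ` nodes R \<subseteq> nodes H"
  and commutes: "\<And>x. x \<in> nodes L \<Longrightarrow> \<delta> (\<tau> x) = \<tau>1 (m x)"
  using po by (simp_all add: set_pushout_def H_nodes)

lemma node_cases:
  assumes "y \<in> nodes H"
  obtains (Gamma) x where "x \<in> nodes G - m ` nodes L" "y = \<tau>1 x"
    | (Sigma) n where "n \<in> dom \<sigma>" "y = \<delta> n"
    | (Delta) n where "n \<in> nodes R - dom \<sigma>" "y = \<delta> n"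
proof -
  have "y \<in> \<tau>1 ` nodes G \<union> \<delta> ` nodes R"
    using assms set_pushout_jointly_surjective[OF po] H_nodes by blast
  moreover have "\<tau>1 (m x) \<in> \<delta> ` nodes R" if "x \<in> nodes L" for x
    using commutes[OF that] tau_nodes that by (metis image_eqI image_subset_iff)
  ultimately show thesis using that by blast
qed

lemma delta_clone:
  assumes "n \<in> dom \<sigma>"
  shows "is_clone G H \<tau>1 (\<delta> n) (m (the (\<sigma> n)))"
proof -
  have "is_clone G H \<tau>1 (\<delta> n) (the (\<sigma>1 (\<delta> n)))" using H_Sigma assms by blast
  then show ?thesis using sigma1_eq assms by simp
qed

lemma delta_graph_hom: "graph_hom R H \<delta>"
proof -
  have "lab H (\<delta> n) = lab R n \<and> succ H (\<delta> n) = map \<delta> (succ R n)"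
    if n: "n \<in> nodes R" and ln: "labeled R n" for n
  proof (cases "n \<in> dom \<sigma>")
    case False
    with H_Delta n ln show ?thesis by (auto simp: strictly_graphic_at_def)
  next
    case True
    define q where "q = the (\<sigma> n)"
    have q: "q \<in> nodes L" using sigma_nodes[OF True] by (simp add: q_def)
    have clone_q: "is_clone L R \<tau> n q" using clone_R True ln by (simp add: q_def)
    then have lq: "labeled L q" using ln by (simp add: is_clone_def)
    have mq: "lab G (m q) = lab L q" "succ G (m q) = map m (succ L q)"
      using m_graph_hom q lq by (auto simp: graph_hom_def)
    then have lmq: "labeled G (m q)" using lq by (simp add: labeled_def)
    have clone_mq: "is_clone G H \<tau>1 (\<delta> n) (m q)" using delta_clone[OF True] by (simp add: q_def)
    have "succ H (\<delta> n) = map \<tau>1 (map m (succ L q))"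
      using clone_mq lmq mq by (simp add: is_clone_def)
    also have "\<dots> = map \<delta> (map \<tau> (succ L q))"
      using wf_graph_succ_subset[OF wfL lq] commutes by (auto simp: subset_iff)
    also have "\<dots> = map \<delta> (succ R n)" using clone_q lq by (simp add: is_clone_def)
    finally show ?thesis using clone_mq clone_q lmq lq mq by (simp add: is_clone_def)
  qed
  then show ?thesis using delta_nodes by (simp add: graph_hom_def)
qed

lemma is_cloning_cone: "cloning_cone ar L R \<tau> \<sigma> G m H \<tau>1 \<delta> \<sigma>1"
proof -
  have "ran \<sigma>1 \<subseteq> nodes G"
  proof
    fix q assume "q \<in> ran \<sigma>1"
    then obtain y where y: "\<sigma>1 y = Some q" by (auto simp: ran_def)
    then have "y \<in> dom \<sigma>1" by blast
    then obtain n where n: "n \<in> dom \<sigma>" "y = \<delta> n" using sigma1_dom by blast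
    then have "q = m (the (\<sigma> n))" using sigma1_eq y by simp
    then show "q \<in> nodes G" using sigma_nodes[OF n(1)] m_graph_hom by (auto simp: graph_hom_def)
  qed
  moreover have "dom \<sigma>1 \<subseteq> nodes H" using sigma1_dom dom_sigma_nodes delta_nodes by blast
  moreover have clones: "\<forall>n1\<in>dom \<sigma>1. is_clone G H \<tau>1 n1 (the (\<sigma>1 n1))"
    using H_Sigma by (simp only: sigma1_dom)
  ultimately have "rewrite_rule ar G H \<tau>1 \<sigma>1"
    using wfG wfH tau1_nodes unfolding rewrite_rule_def by blast
  moreover have "rule_morphism L R \<tau> \<sigma> G H \<tau>1 \<sigma>1 m \<delta>"
    unfolding rule_morphism_def using m_graph_hom delta_graph_hom commutes sigma1_dom sigma1_eq
    by blast
  moreover have "\<forall>n\<in>nodes G - m ` nodes L. graphic_at G H \<tau>1 n"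
    using H_Gamma unfolding graphic_at_def strictly_graphic_at_def by blast
  ultimately show ?thesis using clones unfolding cloning_cone_def by blast
qed

lemma cone_morphisms_agree:
  assumes "cone_morphism L R G H \<tau>1 \<delta> \<sigma>1 H' \<tau>1' d' \<sigma>1' h"
    and "cone_morphism L R G H \<tau>1 \<delta> \<sigma>1 H' \<tau>1' d' \<sigma>1' h'"
    and "y \<in> nodes H"
  shows "h' y = h y"
  using assms(3)
  by (cases rule: node_cases) (use assms(1,2) dom_sigma_nodes in \<open>auto simp: cone_morphism_def\<close>)

context
  fixes H' :: "('k, 'f) tgraph" and \<tau>1' d' \<sigma>1' h
  assumes cone': "cloning_cone ar L R \<tau> \<sigma> G m H' \<tau>1' d' \<sigma>1'"
    and h_tau1: "\<forall>x\<in>nodes G. h (\<tau>1 x) = \<tau>1' x"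
    and h_delta: "\<forall>x\<in>nodes R. h (\<delta> x) = d' x"
begin

lemma mediating_maps_nodes:
  assumes "y \<in> nodes H"
  shows "h y \<in> nodes H'"
proof -
  have "\<tau>1' ` nodes G \<subseteq> nodes H'" and "graph_hom R H' d'"
    using cone' by (simp_all add: cloning_cone_def rewrite_rule_def rule_morphism_def)
  with assms show ?thesis
    by (cases rule: node_cases)
      (use h_tau1 h_delta dom_sigma_nodes in \<open>force simp: graph_hom_def\<close>)+
qed

lemma mediating_preserves_labeled_nodes:
  assumes y: "y \<in> nodes H" and ly: "labeled H y"
  shows "lab H' (h y) = lab H y \<and> succ H' (h y) = map h (succ H y)"
proof -
  have graphic': "\<forall>n\<in>nodes G - m ` nodes L. graphic_at G H' \<tau>1' n"
    and clone': "\<forall>n1\<in>dom \<sigma>1'. is_clone G H' \<tau>1' n1 (the (\<sigma>1' n1))"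
    and d'_hom: "graph_hom R H' d'" and d'_dom: "d' ` dom \<sigma> \<subseteq> dom \<sigma>1'"
    and d'_sigma: "\<forall>n\<in>dom \<sigma>. \<sigma>1' (d' n) = Some (m (the (\<sigma> n)))"
    using cone' by (simp_all add: cloning_cone_def rule_morphism_def)
  from y show ?thesis
  proof (cases rule: node_cases)
    case (Gamma x)
    have sg: "strictly_graphic_at G H \<tau>1 x" using H_Gamma Gamma by blast
    with ly Gamma have lx: "labeled G x" by (auto simp: strictly_graphic_at_def)
    moreover have "graphic_at G H' \<tau>1' x" using graphic' Gamma by blast
    ultimately show ?thesis
      using sg Gamma h_tau1 wf_graph_succ_subset[OF wfG lx]
      by (auto simp: graphic_at_def strictly_graphic_at_def subset_iff)
  next
    case (Sigma n)
    define q where "q = m (the (\<sigma> n))"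
    have "n \<in> nodes R" using Sigma dom_sigma_nodes by blast
    have clone_q: "is_clone G H \<tau>1 y q" using delta_clone Sigma by (simp add: q_def)
    then have lq: "labeled G q" using ly by (simp add: is_clone_def)
    have "is_clone G H' \<tau>1' (d' n) q"
      using clone' d'_dom d'_sigma Sigma by (force simp: q_def)
    then show ?thesis
      using clone_q lq Sigma \<open>n \<in> nodes R\<close> h_tau1 h_delta wf_graph_succ_subset[OF wfG lq]
      by (auto simp: is_clone_def subset_iff)
  next
    case (Delta n)
    have sg: "strictly_graphic_at R H \<delta> n" using H_Delta Delta by blast
    with ly Delta have ln: "labeled R n" by (auto simp: strictly_graphic_at_def)
    then show ?thesis
      using sg Delta d'_hom h_delta wf_graph_succ_subset[OF wfR ln]
      by (auto simp: graph_hom_def strictly_graphic_at_def subset_iff)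
  qed
qed

lemma mediating_graph_hom: "graph_hom H H' h"
  using mediating_maps_nodes mediating_preserves_labeled_nodes by (auto simp: graph_hom_def)

lemma mediating_cone_morphism: "cone_morphism L R G H \<tau>1 \<delta> \<sigma>1 H' \<tau>1' d' \<sigma>1' h"
proof -
  have d'_dom: "d' ` dom \<sigma> \<subseteq> dom \<sigma>1'"
    and d'_sigma: "\<forall>n\<in>dom \<sigma>. \<sigma>1' (d' n) = Some (m (the (\<sigma> n)))"
    using cone' by (simp_all add: cloning_cone_def rule_morphism_def)
  have h_delta_dom: "h (\<delta> n) = d' n" if "n \<in> dom \<sigma>" for n
    using that h_delta dom_sigma_nodes by blast
  have "h ` dom \<sigma>1 \<subseteq> dom \<sigma>1'"
  proof
    fix z assume "z \<in> h ` dom \<sigma>1"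
    then obtain n where "n \<in> dom \<sigma>" "z = h (\<delta> n)" using sigma1_dom by auto
    then show "z \<in> dom \<sigma>1'" using d'_dom h_delta_dom by blast
  qed
  moreover have "\<forall>y\<in>dom \<sigma>1. \<sigma>1' (h y) = \<sigma>1 y"
  proof
    fix y assume "y \<in> dom \<sigma>1"
    then obtain n where "n \<in> dom \<sigma>" "y = \<delta> n" using sigma1_dom by auto
    then show "\<sigma>1' (h y) = \<sigma>1 y" using d'_sigma sigma1_eq h_delta_dom by simp
  qed
  ultimately show ?thesis
    using mediating_graph_hom h_tau1 h_delta by (simp add: cone_morphism_def)
qed

end

lemma is_cloning_pushout: "cloning_pushout TYPE('k) ar L R \<tau> \<sigma> G m H \<tau>1 \<delta> \<sigma>1"
  unfolding cloning_pushout_def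
proof (intro conjI allI impI is_cloning_cone)
  fix H' :: "('k, 'f) tgraph" and \<tau>1' d' \<sigma>1'
  assume cone': "cloning_cone ar L R \<tau> \<sigma> G m H' \<tau>1' d' \<sigma>1'"
  then have "\<forall>x\<in>nodes L. d' (\<tau> x) = \<tau>1' (m x)"
    by (simp add: cloning_cone_def rule_morphism_def)
  then obtain h where "\<forall>x\<in>nodes G. h (\<tau>1 x) = \<tau>1' x" "\<forall>x\<in>nodes R. h (\<delta> x) = d' x"
    by (rule set_pushout_factor[OF po])
  with cone' show "\<exists>h. cone_morphism L R G H \<tau>1 \<delta> \<sigma>1 H' \<tau>1' d' \<sigma>1' h \<and>
      (\<forall>h'. cone_morphism L R G H \<tau>1 \<delta> \<sigma>1 H' \<tau>1' d' \<sigma>1' h' \<longrightarrow> (\<forall>y\<in>nodes H. h' y = h y))"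
    using mediating_cone_morphism cone_morphisms_agree by blast
qed

end

theorem theorem1:
  fixes ar :: "'f \<Rightarrow> nat"
    and L :: "('l, 'f) tgraph" and R :: "('r, 'f) tgraph" and G :: "('g, 'f) tgraph"
    and \<tau> :: "'l \<Rightarrow> 'r" and \<sigma> :: "'r \<Rightarrow> 'l option" and m :: "'l \<Rightarrow> 'g"
    and Hs :: "'h set" and \<tau>1 :: "'g \<Rightarrow> 'h" and \<delta> :: "'r \<Rightarrow> 'h"
    and \<sigma>1 :: "'h \<Rightarrow> 'g option" and H :: "('h, 'f) tgraph"
  assumes rule: "rewrite_rule ar L R \<tau> \<sigma>"
    and wfG: "wf_graph ar G"
    and match: "matching L R \<tau> \<sigma> G m"
    and po: "set_pushout TYPE(('g + 'r) set) (nodes L) (nodes R) (nodes G) \<tau> m Hs \<tau>1 \<delta>"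
    and sigma1_dom: "dom \<sigma>1 = \<delta> ` dom \<sigma>"
    and sigma1_eq: "\<forall>n\<in>dom \<sigma>. \<sigma>1 (\<delta> n) = Some (m (the (\<sigma> n)))"
    and wfH: "wf_graph ar H"
    and H_nodes: "nodes H = Hs"
    and H_Gamma: "\<forall>n\<in>nodes G - m ` nodes L. strictly_graphic_at G H \<tau>1 n"
    and H_Delta: "\<forall>n\<in>nodes R - dom \<sigma>. strictly_graphic_at R H \<delta> n"
    and H_Sigma: "\<forall>n1\<in>\<delta> ` dom \<sigma>. is_clone G H \<tau>1 n1 (the (\<sigma>1 n1))"
  shows "graph_hom R H \<delta> \<and> cloning_pushout TYPE('k) ar L R \<tau> \<sigma> G m H \<tau>1 \<delta> \<sigma>1"
proof -
  interpret cloning_construction ar L R G \<tau> \<sigma> m Hs \<tau>1 \<delta> \<sigma>1 H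
    using assms by (rule cloning_construction.intro)
  show ?thesis using delta_graph_hom is_cloning_pushout by blast
qed

end
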